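(* For every fixed $y\in\mathbb R^{|\mathcal S^{\mathrm h}|\cdot|\Omega|}$ (held constant), the ODE $\frac{dx}{dt}=h(x(t),y)$ on $\mathbb R^{|\mathcal S^{\mathrm l}|\cdot|\mathcal A|}$ has a globally asymptotically stable equilibrium $\lambda(y)$. Moreover, the map $y\mapsto\lambda(y)$ is Lipschitz.
   Context: $\mathcal S,\mathcal A$ are finite sets, $P(s'|s,a)$ a transition kernel on $\mathcal S$, $T\ge1$ an integer, $\Omega=\mathcal S$, $\mathcal S^{\mathrm{de}}=\{0,\dots,T-1\}$ with deterministic kernel $P^{\mathrm{de}}(d'|d)=1$ iff $d'=d+1$ for $d\ne T-1$ and $d'=0$ for $d=T-1$. $\mathcal S^{\mathrm h}=\mathcal S$, $\mathcal S^{\mathrm l}=\mathcal S\times\Omega\times\mathcal S^{\mathrm{de}}$. $r^{\mathrm l}:\mathcal S^{\mathrm l}\times\mathcal A\to\mathbb R$ is bounded, $\gamma^{\mathrm l}\in(0,1)$. Given a high-level policy $\pi^{\mathrm h}(\omega|s)$, the low-level kernel is $P^{\mathrm l}_{\pi^{\mathrm h}}((s',\omega',d')|(s,\omega,d),a)=P^{\mathrm{de}}(d'|d)P(s'|s,a)q$ with $q=0$ if $d\ne T-1,\omega'\ne\omega$; $q=1$ if $d\ne T-1,\omega'=\omega$; $q=\pi^{\mathrm h}(\omega'|s)$ if $d=T-1$. The high-level policy is obtained from a high-level Q-table $Q^{\mathrm h}\in\mathbb R^{|\mathcal S^{\mathrm h}|\times|\Omega|}$ by a policy extraction map $\pi^{\mathrm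 h}=\mathcal F^{\mathrm h}(Q^{\mathrm h})$ that is Lipschitz in the infinity norm. Write $x=\mathrm{vec}(Q^{\mathrm l})$ for $Q^{\mathrm l}\in\mathbb R^{|\mathcal S^{\mathrm l}|\times|\mathcal A|}$ and $y=\mathrm{vec}(Q^{\mathrm h})$. The vector field $h$ has components $h_{s^{\mathrm l},a}(x,y)=r^{\mathrm l}(s^{\mathrm l},a)+\gamma^{\mathrm l}\sum_{s^{\mathrm l,+}}P^{\mathrm l}_{\pi^{\mathrm h}}(s^{\mathrm l,+}|s^{\mathrm l},a)\max_{a^+}Q^{\mathrm l}(s^{\mathrm l,+},a^+)-Q^{\mathrm l}(s^{\mathrm l},a)$, with $\pi^{\mathrm h}=\mathcal F^{\mathrm h}(Q^{\mathrm h})$. *)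

theory Defs
  imports "HOL-Analysis.Analysis"
begin

text \<open>Index conventions.
  's : state set S (also S^h and the option set Omega = S);
  'a : action set A;
  'd : the clock set S^de, identified with {0,...,T-1} via a bijection enc,
       where T = CARD('d) >= 1.
  Low-level state s^l = (s, omega, d) :: 's * 's * 'd.
  x = vec(Q^l) :: real^(('s * 's * 'd) * 'a),  y = vec(Q^h) :: real^('s * 's).\<close>

definition Pde :: "('d \<Rightarrow> nat) \<Rightarrow> 'd \<Rightarrow> 'd \<Rightarrow> real" where
  "Pde enc d d' =
     (if enc d \<noteq> CARD('d) - 1 then (if enc d' = enc d + 1 then 1 else 0)
      else (if enc d' = 0 then 1 else 0))"

text \<open>Low-level transition kernel induced by the high-level policy pih (pih s omega = pi^h(omega|s)).\<close>
definition Pl :: "('d \<Rightarrow> nat) \<Rightarrow> ('s \<Rightarrow> 'a \<Rightarrow> 's \<Rightarrow> real) \<Rightarrow> ('s \<Rightarrow> 's \<Rightarrow> real)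
    \<Rightarrow> ('s \<times> 's \<times> 'd) \<Rightarrow> 'a \<Rightarrow> ('s \<times> 's \<times> 'd) \<Rightarrow> real" where
  "Pl enc P pih sl a sl' =
     (case sl of (s, \<omega>, d) \<Rightarrow> case sl' of (s', \<omega>', d') \<Rightarrow>
        Pde enc d d' * P s a s' *
        (if enc d \<noteq> CARD('d) - 1 then (if \<omega>' = \<omega> then 1 else 0) else pih s \<omega>'))"

definition hfield :: "('d \<Rightarrow> nat) \<Rightarrow> ('s \<Rightarrow> 'a \<Rightarrow> 's \<Rightarrow> real)
    \<Rightarrow> (('s \<times> 's \<times> 'd) \<Rightarrow> 'a \<Rightarrow> real) \<Rightarrow> real
    \<Rightarrow> (real^('s \<times> 's) \<Rightarrow> 's \<Rightarrow> 's \<Rightarrow> real)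
    \<Rightarrow> real^(('s::finite \<times> 's \<times> 'd::finite) \<times> 'a::finite) \<Rightarrow> real^('s \<times> 's)
    \<Rightarrow> real^(('s \<times> 's \<times> 'd) \<times> 'a)" where
  "hfield enc P rl \<gamma> Fh x y = (\<chi> i. case i of (sl, a) \<Rightarrow>
      rl sl a
      + \<gamma> * (\<Sum>sl'\<in>UNIV. Pl enc P (Fh y) sl a sl' * Max (range (\<lambda>a'. x $ (sl', a'))))
      - x $ (sl, a))"

definition ode_solution :: "('v::real_normed_vector \<Rightarrow> 'v) \<Rightarrow> (real \<Rightarrow> 'v) \<Rightarrow> bool" where
  "ode_solution f z \<longleftrightarrow> (\<forall>t\<ge>0. (z has_vector_derivative f (z t)) (at t within {0..}))"

definition glob_asym_stable_eq :: "('v::real_normed_vector \<Rightarrow> 'v) \<Rightarrow> 'v \<Rightarrow> bool" where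
  "glob_asym_stable_eq f e \<longleftrightarrow>
     f e = 0 \<and>
     (\<forall>\<epsilon>>0. \<exists>\<delta>>0. \<forall>z. ode_solution f z \<and> norm (z 0 - e) < \<delta> \<longrightarrow>
                          (\<forall>t\<ge>0. norm (z t - e) < \<epsilon>)) \<and>
     (\<forall>z. ode_solution f z \<longrightarrow> (z \<longlongrightarrow> e) at_top)"

end

theory Submission
  imports Defs
begin

text \<open>For fixed y the field is h(x, y) = T_y x - x, where T_y is the Bellman operator of
  the low-level kernel induced by the policy F^h(y). This kernel is substochastic, so T_y is
  a \<gamma>-contraction for the sup norm. Hence it has a fixed point \<lambda>(y), and a barrier argument
  shows that along every solution the sup-norm distance to \<lambda>(y) decays like exp(-k t) for
  each k < 1 - \<gamma>, which gives global asymptotic stability. For the Lipschitz bound, all fixed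
  points lie in the sup-norm ball of radius |r|_\<infinity>/(1 - \<gamma>), on which T_y depends
  Lipschitz continuously on y through F^h; and a \<gamma>-contraction moves its fixed point by at
  most 1/(1 - \<gamma>) times the perturbation of the operator.\<close>

lemma infnorm_attained_cart: "\<exists>i. infnorm (x::real^'n) = \<bar>x$i\<bar>"
proof -
  have "infnorm x = Max (range (\<lambda>i. \<bar>x$i\<bar>))"
  proof -
    have "{\<bar>x$i\<bar> |i. i \<in> UNIV} = range (\<lambda>i. \<bar>x$i\<bar>)" by auto
    then show ?thesis
      unfolding infnorm_cart
      by (metis cSup_eq_Max finite_imageI finite_class.finite_UNIV range_eqI empty_iff)
  qed
  moreover have "Max (range (\<lambda>i. \<bar>x$i\<bar>)) \<in> range (\<lambda>i. \<bar>x$i\<bar>)"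
    by (rule Max_in) auto
  ultimately show ?thesis by (metis imageE)
qed

lemma infnorm_le_cart: "(\<And>i. \<bar>(x::real^'n)$i\<bar> \<le> c) \<Longrightarrow> infnorm x \<le> c"
  using infnorm_attained_cart[of x] by metis

lemma lipschitz_on_UNIV_if_infnorm_le:
  fixes f :: "'a::euclidean_space \<Rightarrow> 'b::euclidean_space"
  assumes "0 \<le> C" and "\<And>x y. infnorm (f x - f y) \<le> C * infnorm (x - y)"
  shows "(sqrt DIM('b) * C)-lipschitz_on UNIV f"
proof (rule lipschitz_onI)
  fix x y :: 'a
  have "dist (f x) (f y) \<le> sqrt DIM('b) * infnorm (f x - f y)"
    unfolding dist_norm by (rule norm_le_infnorm)
  also have "\<dots> \<le> sqrt DIM('b) * (C * dist x y)"
  proof (intro mult_left_mono)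
    show "infnorm (f x - f y) \<le> C * dist x y"
      using assms(2)[of x y] mult_left_mono[OF infnorm_le_norm[of "x - y"] assms(1)]
      by (simp add: dist_norm)
  qed simp
  finally show "dist (f x) (f y) \<le> sqrt DIM('b) * C * dist x y" by simp
qed (use assms in simp)

lemma infnorm_contraction_funpow:
  fixes T :: "'a::euclidean_space \<Rightarrow> 'a"
  assumes "0 \<le> \<gamma>" and contr: "\<And>x y. infnorm (T x - T y) \<le> \<gamma> * infnorm (x - y)"
  shows "infnorm ((T^^n) x - (T^^n) y) \<le> \<gamma>^n * infnorm (x - y)"
proof (induction n)
  case (Suc n)
  have "infnorm ((T^^Suc n) x - (T^^Suc n) y) \<le> \<gamma> * infnorm ((T^^n) x - (T^^n) y)"
    using contr by simp
  also have "\<dots> \<le> \<gamma> * (\<gamma>^n * infnorm (x - y))" using Suc assms(1) by (rule mult_left_mono)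
  finally show ?case by simp
qed simp

text \<open>Some iterate of T is a contraction for the Euclidean norm, so Banach's theorem applies to it;
  its unique fixed point is then fixed by T as well.\<close>
lemma infnorm_contraction_has_fixpoint:
  fixes T :: "'a::euclidean_space \<Rightarrow> 'a"
  assumes "0 \<le> \<gamma>" "\<gamma> < 1" and contr: "\<And>x y. infnorm (T x - T y) \<le> \<gamma> * infnorm (x - y)"
  shows "\<exists>p. T p = p"
proof -
  define N where "N = sqrt DIM('a)"
  have N1: "N \<ge> 1" unfolding N_def using DIM_positive[where 'a='a] by simp
  obtain m where m: "\<gamma>^m < 1 / (2*N)"
    using real_arch_pow_inv[of "1/(2*N)" \<gamma>] N1 assms(1,2) by auto
  have "dist ((T^^m) x) ((T^^m) y) \<le> (N * \<gamma>^m) * dist x y" for x y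
  proof -
    have "dist ((T^^m) x) ((T^^m) y) \<le> N * infnorm ((T^^m) x - (T^^m) y)"
      unfolding dist_norm N_def by (rule norm_le_infnorm)
    also have "\<dots> \<le> N * (\<gamma>^m * infnorm (x - y))"
      using infnorm_contraction_funpow[OF assms(1) contr] N1 by (intro mult_left_mono) auto
    also have "\<dots> \<le> N * (\<gamma>^m * dist x y)"
      using N1 assms(1) infnorm_le_norm[of "x - y"] by (intro mult_left_mono) (auto simp: dist_norm)
    finally show ?thesis by simp
  qed
  moreover have "0 \<le> N * \<gamma>^m" "N * \<gamma>^m < 1" using m N1 assms(1) by (simp_all add: field_simps)
  ultimately obtain p where p: "(T^^m) p = p" and uniq: "\<And>q. (T^^m) q = q \<Longrightarrow> q = p"
    using banach_fix_type[of "N * \<gamma>^m" "T^^m"] by metis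
  have "(T^^m) (T p) = T p" by (metis funpow_swap1 p)
  then show ?thesis using uniq by metis
qed

lemma infnorm_contraction_fixpoint_perturb:
  fixes T S :: "'a::euclidean_space \<Rightarrow> 'a"
  assumes "\<gamma> < 1" and contr: "\<And>x y. infnorm (T x - T y) \<le> \<gamma> * infnorm (x - y)"
    and "T p = p" "S q = q"
  shows "infnorm (p - q) \<le> infnorm (T q - S q) / (1 - \<gamma>)"
proof -
  have "infnorm (p - q) = infnorm ((T p - T q) + (T q - S q))" using assms(3,4) by simp
  also have "\<dots> \<le> \<gamma> * infnorm (p - q) + infnorm (T q - S q)"
    using infnorm_triangle contr by (metis add_right_mono order_trans)
  finally show ?thesis using assms(1) by (simp add: field_simps)
qed

lemma infnorm_contraction_fixpoint_le:
  fixes T :: "'a::euclidean_space \<Rightarrow> 'a"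
  assumes "\<gamma> < 1" and "\<And>x y. infnorm (T x - T y) \<le> \<gamma> * infnorm (x - y)" and "T p = p"
  shows "infnorm p \<le> infnorm (T 0) / (1 - \<gamma>)"
  using infnorm_contraction_fixpoint_perturb[OF assms, of "\<lambda>_. 0" 0] by (simp add: infnorm_neg)

lemma infnorm_contraction_fixpoint_lipschitz:
  fixes T :: "'b::euclidean_space \<Rightarrow> 'a::euclidean_space \<Rightarrow> 'a"
  assumes "\<gamma> < 1" and contr: "\<And>y x x'. infnorm (T y x - T y x') \<le> \<gamma> * infnorm (x - x')"
    and fixed: "\<And>y. T y (p y) = p y" and bounded: "\<And>y. infnorm (p y) \<le> B"
    and "0 \<le> M" and pert: "\<And>y y' x. infnorm (T y x - T y' x) \<le> M * infnorm (y - y') * infnorm x"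
  shows "infnorm (p y - p y') \<le> M * B / (1 - \<gamma>) * infnorm (y - y')"
proof -
  have "infnorm (p y - p y') \<le> infnorm (T y (p y') - T y' (p y')) / (1 - \<gamma>)"
    by (rule infnorm_contraction_fixpoint_perturb[where T = "T y" and S = "T y'", OF assms(1) contr fixed fixed])
  also have "\<dots> \<le> M * infnorm (y - y') * B / (1 - \<gamma>)"
  proof (rule divide_right_mono)
    have "infnorm (T y (p y') - T y' (p y')) \<le> M * infnorm (y - y') * infnorm (p y')"
      by (rule pert)
    also have "\<dots> \<le> M * infnorm (y - y') * B"
      using bounded \<open>0 \<le> M\<close> by (simp add: mult_left_mono infnorm_pos_le)
    finally show "infnorm (T y (p y') - T y' (p y')) \<le> M * infnorm (y - y') * B" .
  qed (use assms(1) in simp)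
  finally show ?thesis by (simp add: mult_ac)
qed

lemma first_zero_crossing:
  fixes f :: "real \<Rightarrow> real"
  assumes cont: "continuous_on {0..} f" and "f 0 < 0" "0 \<le> t0" "0 \<le> f t0"
  obtains ts where "0 < ts" "f ts = 0" "\<And>t. 0 \<le> t \<Longrightarrow> t < ts \<Longrightarrow> f t < 0"
proof -
  define S where "S = {0..} \<inter> f -` {0..}"
  have "closed S" unfolding S_def by (rule continuous_closed_preimage[OF cont]) auto
  moreover have "t0 \<in> S" "bdd_below S" using assms(3,4) by (auto simp: S_def intro: bdd_belowI[of _ 0])
  ultimately have "Inf S \<in> S" using closed_contains_Inf by blast
  then have ts0: "0 \<le> Inf S" and fts: "0 \<le> f (Inf S)" by (auto simp: S_def)
  have before: "f t < 0" if "0 \<le> t" "t < Inf S" for t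
    using that cInf_lower[OF _ \<open>bdd_below S\<close>, of t] by (force simp: S_def)
  have pos: "0 < Inf S" using ts0 fts assms(2) by (cases "Inf S = 0") auto
  have "f (Inf S) \<le> 0"
    using pos cont before
    by (intro continuous_le_on_closure[of "{0..<Inf S}" f "Inf S" 0])
       (auto intro: continuous_on_subset less_imp_le)
  with fts pos before show ?thesis using that by fastforce
qed

lemma positive_before_if_deriv_neg:
  fixes \<phi> :: "real \<Rightarrow> real"
  assumes "(\<phi> has_real_derivative D) (at t)" "D < 0" "\<phi> t = 0" "0 < t"
  shows "\<exists>s. 0 \<le> s \<and> s < t \<and> 0 < \<phi> s"
proof -
  obtain d where "0 < d" and dec: "\<And>h. 0 < h \<Longrightarrow> h < d \<Longrightarrow> \<phi> t < \<phi> (t - h)"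
    using DERIV_neg_dec_left[OF assms(1,2)] by blast
  define h where "h = min d t / 2"
  have "0 < h" "h < d" "h \<le> t" using \<open>0 < d\<close> assms(4) by (auto simp: h_def)
  then show ?thesis using dec assms(3) by (intro exI[of _ "t - h"]) auto
qed

text \<open>A barrier argument: at the first time the sup norm of u meets the exponential c exp(-k t),
  the coordinate realising the sup norm would have to decrease faster than the exponential.\<close>
lemma infnorm_exp_barrier:
  fixes u g :: "real \<Rightarrow> real^'n"
  assumes der: "\<And>t. 0 \<le> t \<Longrightarrow> (u has_vector_derivative (g t - u t)) (at t within {0..})"
    and g: "\<And>t. 0 \<le> t \<Longrightarrow> infnorm (g t) \<le> \<gamma> * infnorm (u t)"
    and k: "0 < k" "k < 1 - \<gamma>" and c: "infnorm (u 0) < c" and "0 \<le> t0"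
  shows "infnorm (u t0) < c * exp (- k * t0)"
proof (rule ccontr)
  assume crossed: "\<not> ?thesis"
  define b where "b t = c * exp (- k * t)" for t
  have b_pos: "0 < b t" for t using c infnorm_pos_le[of "u 0"] by (simp add: b_def)
  have "continuous_on {0..} u"
    using der by (auto intro: has_vector_derivative_continuous simp: continuous_on_eq_continuous_within)
  then have "continuous_on {0..} (\<lambda>t. infnorm (u t) - b t)"
    unfolding b_def by (intro continuous_intros)
  then obtain ts where ts: "0 < ts" "infnorm (u ts) = b ts"
    and before: "\<And>t. 0 \<le> t \<Longrightarrow> t < ts \<Longrightarrow> infnorm (u t) < b t"
    using first_zero_crossing[of "\<lambda>t. infnorm (u t) - b t" t0] c \<open>0 \<le> t0\<close> crossed
    by (auto simp: b_def)
  obtain i where i: "infnorm (u ts) = \<bar>u ts $ i\<bar>" using infnorm_attained_cart by blast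
  define \<sigma> where "\<sigma> = (if u ts $ i \<ge> 0 then 1 else -1::real)"
  have \<sigma>_le: "\<sigma> * v \<le> \<bar>v\<bar>" for v unfolding \<sigma>_def by auto
  have \<sigma>_ts: "\<sigma> * u ts $ i = b ts" using i ts(2) unfolding \<sigma>_def by auto
  define \<phi> where "\<phi> t = \<sigma> * u t $ i - b t" for t
  have "at ts within {0..} = at ts" using ts(1) by (intro at_within_interior) simp
  then have "((\<lambda>t. u t $ i) has_real_derivative (g ts - u ts) $ i) (at ts)"
    using bounded_linear.has_vector_derivative[OF bounded_linear_vec_nth der[of ts]] ts(1)
    by (simp add: has_real_derivative_iff_has_vector_derivative)
  then have "(\<phi> has_real_derivative \<sigma> * (g ts - u ts) $ i + k * b ts) (at ts)"
    unfolding \<phi>_def b_def by (auto intro!: derivative_eq_intros)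
  moreover have "\<sigma> * (g ts - u ts) $ i + k * b ts < 0"
  proof -
    have "\<sigma> * g ts $ i \<le> \<gamma> * b ts"
      using \<sigma>_le[of "g ts $ i"] component_le_infnorm_cart[of "g ts" i] g[of ts] ts by simp
    moreover have "(\<gamma> - 1 + k) * b ts < 0" using k b_pos[of ts] by (intro mult_neg_pos) auto
    ultimately show ?thesis using \<sigma>_ts by (simp add: algebra_simps)
  qed
  moreover have "\<phi> ts = 0" using \<sigma>_ts by (simp add: \<phi>_def)
  ultimately obtain s where "0 \<le> s" "s < ts" "0 < \<phi> s"
    using positive_before_if_deriv_neg ts(1) by blast
  then show False
    using before[of s] \<sigma>_le[of "u s $ i"] component_le_infnorm_cart[of "u s" i] by (simp add: \<phi>_def)
qed

lemma contraction_flow_decay: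
  fixes T :: "real^'n \<Rightarrow> real^'n"
  assumes contr: "\<And>x y. infnorm (T x - T y) \<le> \<gamma> * infnorm (x - y)" and fixed: "T e = e"
    and sol: "ode_solution (\<lambda>x. T x - x) z"
    and "0 < k" "k < 1 - \<gamma>" "infnorm (z 0 - e) < c" "0 \<le> t"
  shows "infnorm (z t - e) < c * exp (- k * t)"
proof -
  have "((\<lambda>t. z t - e) has_vector_derivative (T (z t) - T e) - (z t - e)) (at t within {0..})"
    if "0 \<le> t" for t
    using sol that fixed unfolding ode_solution_def by (auto intro!: derivative_eq_intros)
  then show ?thesis
    using infnorm_exp_barrier[of "\<lambda>t. z t - e" "\<lambda>t. T (z t) - T e"] contr assms(4-) by blast
qed

lemma contraction_flow_glob_asym_stable:
  fixes T :: "real^'n \<Rightarrow> real^'n"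
  assumes "\<gamma> < 1" and contr: "\<And>x y. infnorm (T x - T y) \<le> \<gamma> * infnorm (x - y)"
    and fixed: "T e = e"
  shows "glob_asym_stable_eq (\<lambda>x. T x - x) e"
proof -
  define N where "N = sqrt DIM(real^'n)"
  have N1: "1 \<le> N" unfolding N_def using DIM_positive[where 'a="real^'n"] by simp
  have norm_le: "norm v \<le> N * infnorm v" for v :: "real^'n" unfolding N_def by (rule norm_le_infnorm)
  define k where "k = (1 - \<gamma>) / 2"
  have k: "0 < k" "k < 1 - \<gamma>" using assms(1) by (auto simp: k_def)
  note decay = contraction_flow_decay[OF contr fixed _ k]
  have "\<exists>\<delta>>0. \<forall>z. ode_solution (\<lambda>x. T x - x) z \<and> norm (z 0 - e) < \<delta> \<longrightarrow>
                     (\<forall>t\<ge>0. norm (z t - e) < \<epsilon>)" if "0 < \<epsilon>" for \<epsilon>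
  proof (intro exI[of _ "\<epsilon> / N"] conjI allI impI)
    fix z t assume z: "ode_solution (\<lambda>x. T x - x) z \<and> norm (z 0 - e) < \<epsilon> / N" and "0 \<le> (t::real)"
    then have "infnorm (z t - e) < \<epsilon> / N * exp (- k * t)"
      using decay infnorm_le_norm[of "z 0 - e"] by (meson le_less_trans)
    also have "\<dots> \<le> \<epsilon> / N"
      using that N1 k \<open>0 \<le> t\<close> mult_left_mono[of "exp (- k * t)" 1 "\<epsilon> / N"] by simp
    finally have "infnorm (z t - e) * N < \<epsilon>" using N1 by (simp add: pos_less_divide_eq)
    then show "norm (z t - e) < \<epsilon>"
      using norm_le[of "z t - e"] mult.commute[of N "infnorm (z t - e)"] by linarith
  qed (use that N1 in simp)
  moreover have "(z \<longlongrightarrow> e) at_top" if z: "ode_solution (\<lambda>x. T x - x) z" for z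
  proof -
    define c where "c = infnorm (z 0 - e) + 1"
    have "norm (z t - e) \<le> N * c * exp (- k * t)" if "0 \<le> t" for t
    proof -
      have "infnorm (z t - e) \<le> c * exp (- k * t)"
        using decay[OF z _ that, of c] by (simp add: c_def)
      then have "N * infnorm (z t - e) \<le> N * (c * exp (- k * t))" using N1 by (simp add: mult_left_mono)
      then show ?thesis using norm_le[of "z t - e"] by (simp add: mult.assoc)
    qed
    then have "\<forall>\<^sub>F t in at_top. norm (z t - e) \<le> N * c * exp (- k * t)"
      by (intro eventually_at_top_linorderI[of 0])
    moreover have "((\<lambda>t. N * c * exp (- k * t)) \<longlongrightarrow> 0) at_top"
      using k by (intro tendsto_mult_right_zero filterlim_compose[OF exp_at_bot]
          filterlim_tendsto_neg_mult_at_bot[OF tendsto_const] filterlim_ident) auto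
    ultimately have "((\<lambda>t. z t - e) \<longlongrightarrow> 0) at_top" by (rule Lim_null_comparison)
    then show ?thesis by (simp add: LIM_zero_iff)
  qed
  ultimately show ?thesis unfolding glob_asym_stable_eq_def using fixed by simp
qed

definition substochastic :: "('l::finite \<Rightarrow> 'a \<Rightarrow> 'l \<Rightarrow> real) \<Rightarrow> bool" where
  "substochastic Q \<longleftrightarrow> (\<forall>l a l'. 0 \<le> Q l a l') \<and> (\<forall>l a. (\<Sum>l'\<in>UNIV. Q l a l') \<le> 1)"

definition greedy_value :: "real^('l::finite \<times> 'a::finite) \<Rightarrow> 'l \<Rightarrow> real" where
  "greedy_value x l = Max (range (\<lambda>a. x $ (l, a)))"

definition bellman :: "('l \<Rightarrow> 'a \<Rightarrow> real) \<Rightarrow> real \<Rightarrow> ('l \<Rightarrow> 'a \<Rightarrow> 'l \<Rightarrow> real)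
    \<Rightarrow> real^('l::finite \<times> 'a::finite) \<Rightarrow> real^('l \<times> 'a)" where
  "bellman r \<gamma> Q x = (\<chi> i. case i of (l, a) \<Rightarrow>
      r l a + \<gamma> * (\<Sum>l'\<in>UNIV. Q l a l' * greedy_value x l'))"

lemma Max_range_diff_le:
  fixes f g :: "'a::finite \<Rightarrow> real"
  assumes "\<And>a. \<bar>f a - g a\<bar> \<le> c"
  shows "\<bar>Max (range f) - Max (range g)\<bar> \<le> c"
proof -
  obtain a where a: "Max (range f) = f a" using Max_in[of "range f"] by fastforce
  obtain b where b: "Max (range g) = g b" using Max_in[of "range g"] by fastforce
  have "f b \<le> f a" "g a \<le> g b" using a b Max_ge[of "range f"] Max_ge[of "range g"] by auto
  then show ?thesis using a b assms[of a] assms[of b] by linarith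
qed

lemma greedy_value_diff_le: "\<bar>greedy_value x l - greedy_value y l\<bar> \<le> infnorm (x - y)"
  unfolding greedy_value_def
  by (rule Max_range_diff_le) (metis component_le_infnorm_cart vector_minus_component)

lemma greedy_value_zero [simp]: "greedy_value 0 l = 0"
  by (simp add: greedy_value_def)

lemma abs_greedy_value_le: "\<bar>greedy_value x l\<bar> \<le> infnorm x"
  using greedy_value_diff_le[of x l 0] by simp

lemma bellman_zero: "bellman r \<gamma> Q 0 = (\<chi> i. r (fst i) (snd i))"
  by (simp add: bellman_def vec_eq_iff case_prod_unfold)

lemma bellman_diff_nth:
  "bellman r \<gamma> Q x $ (l, a) - bellman r \<gamma> Q' y $ (l, a)
     = \<gamma> * (\<Sum>l'\<in>UNIV. Q l a l' * greedy_value x l' - Q' l a l' * greedy_value y l')"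
  by (simp add: bellman_def sum_subtractf right_diff_distrib)

lemma bellman_contraction:
  fixes Q :: "'l::finite \<Rightarrow> 'a::finite \<Rightarrow> 'l \<Rightarrow> real"
  assumes Q: "substochastic Q" and "0 \<le> \<gamma>"
  shows "infnorm (bellman r \<gamma> Q x - bellman r \<gamma> Q y) \<le> \<gamma> * infnorm (x - y)"
proof (rule infnorm_le_cart)
  fix i :: "'l \<times> 'a"
  obtain l a where i: "i = (l, a)" by fastforce
  have "\<bar>\<Sum>l'\<in>UNIV. Q l a l' * greedy_value x l' - Q l a l' * greedy_value y l'\<bar>
      \<le> (\<Sum>l'\<in>UNIV. Q l a l' * infnorm (x - y))"
    using Q greedy_value_diff_le[of x _ y]
    by (intro order.trans[OF sum_abs] sum_mono)
       (simp add: substochastic_def abs_mult mult_left_mono flip: right_diff_distrib)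
  also have "\<dots> \<le> infnorm (x - y)"
    using Q infnorm_pos_le[of "x - y"] mult_right_mono[of _ 1 "infnorm (x - y)"]
    by (simp add: substochastic_def flip: sum_distrib_right)
  finally show "\<bar>(bellman r \<gamma> Q x - bellman r \<gamma> Q y) $ i\<bar> \<le> \<gamma> * infnorm (x - y)"
    using assms(2) by (simp add: i bellman_diff_nth abs_mult mult_left_mono)
qed

lemma bellman_kernel_perturbation:
  fixes Q Q' :: "'l::finite \<Rightarrow> 'a::finite \<Rightarrow> 'l \<Rightarrow> real" and K :: real
  assumes "0 \<le> \<gamma>" and K: "\<And>l a l'. \<bar>Q l a l' - Q' l a l'\<bar> \<le> K"
  shows "infnorm (bellman r \<gamma> Q x - bellman r \<gamma> Q' x) \<le> \<gamma> * (CARD('l) * K * infnorm x)"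
proof (rule infnorm_le_cart)
  fix i :: "'l \<times> 'a"
  obtain l a where i: "i = (l, a)" by fastforce
  have "0 \<le> K" using K[of l a l] by linarith
  have "\<bar>\<Sum>l'\<in>UNIV. Q l a l' * greedy_value x l' - Q' l a l' * greedy_value x l'\<bar>
      \<le> (\<Sum>l'\<in>(UNIV::'l set). K * infnorm x)"
    using K abs_greedy_value_le[of x] \<open>0 \<le> K\<close>
    by (intro order.trans[OF sum_abs] sum_mono)
       (simp add: abs_mult mult_mono flip: left_diff_distrib)
  then show "\<bar>(bellman r \<gamma> Q x - bellman r \<gamma> Q' x) $ i\<bar> \<le> \<gamma> * (CARD('l) * K * infnorm x)"
    using assms(1) by (simp add: i bellman_diff_nth abs_mult mult_left_mono mult.assoc)
qed

lemma sum_Pde_le_1: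
  fixes enc :: "'d::finite \<Rightarrow> nat"
  assumes "inj enc"
  shows "(\<Sum>d'\<in>UNIV. Pde enc d d') \<le> 1"
proof -
  define v where "v = (if enc d \<noteq> CARD('d) - 1 then enc d + 1 else 0)"
  have "(\<Sum>d'\<in>UNIV. Pde enc d d') = card {d'. enc d' = v}"
    by (simp add: Pde_def v_def sum.If_cases)
  also have "\<dots> \<le> 1" using assms by (auto simp: card_le_Suc0_iff_eq dest: injD)
  finally show ?thesis by simp
qed

lemma sum_UNIV_triple:
  "(\<Sum>x\<in>(UNIV::('a::finite \<times> 'b::finite \<times> 'c::finite) set). f x)
     = (\<Sum>a\<in>UNIV. \<Sum>b\<in>UNIV. \<Sum>c\<in>UNIV. f (a, b, c))"
  by (simp add: sum.cartesian_product UNIV_Times_UNIV[symmetric] del: UNIV_Times_UNIV)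

lemma substochastic_Pl:
  fixes P :: "'s::finite \<Rightarrow> 'a \<Rightarrow> 's \<Rightarrow> real" and enc :: "'d::finite \<Rightarrow> nat"
  assumes P: "substochastic P" and "inj enc"
    and pih_nonneg: "\<And>s \<omega>. 0 \<le> pih s \<omega>" and pih_sum: "\<And>s. (\<Sum>\<omega>\<in>UNIV. pih s \<omega>) \<le> 1"
  shows "substochastic (Pl enc P pih)"
  unfolding substochastic_def
proof (intro conjI allI)
  fix sl :: "'s \<times> 's \<times> 'd" and a sl'
  show "0 \<le> Pl enc P pih sl a sl'"
    using P pih_nonneg by (auto simp: Pl_def Pde_def substochastic_def split: prod.splits)
next
  fix sl :: "'s \<times> 's \<times> 'd" and a
  obtain s \<omega> d where sl: "sl = (s, \<omega>, d)" by (cases sl) auto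
  define q where "q \<omega>' = (if enc d \<noteq> CARD('d) - 1 then (if \<omega>' = \<omega> then 1 else 0) else pih s \<omega>')" for \<omega>'
  have q_nonneg: "0 \<le> q \<omega>'" for \<omega>' using pih_nonneg by (simp add: q_def)
  have q_sum: "(\<Sum>\<omega>'\<in>UNIV. q \<omega>') \<le> 1"
    using pih_sum by (cases "enc d = CARD('d) - 1") (simp_all add: q_def)
  have "(\<Sum>sl'\<in>UNIV. Pl enc P pih sl a sl')
      = (\<Sum>s'\<in>UNIV. \<Sum>\<omega>'\<in>UNIV. (\<Sum>d'\<in>UNIV. Pde enc d d') * (P s a s' * q \<omega>'))"
    unfolding sum_UNIV_triple by (simp add: Pl_def sl q_def mult.assoc sum_distrib_right)
  also have "\<dots> \<le> (\<Sum>s'\<in>UNIV. \<Sum>\<omega>'\<in>UNIV. P s a s' * q \<omega>')"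
    using sum_Pde_le_1[OF \<open>inj enc\<close>, of d] P q_nonneg
    by (intro sum_mono mult_left_le_one_le) (auto simp: substochastic_def Pde_def intro: sum_nonneg)
  also have "\<dots> = (\<Sum>s'\<in>UNIV. P s a s') * (\<Sum>\<omega>'\<in>UNIV. q \<omega>')"
    by (simp add: sum_product)
  also have "\<dots> \<le> 1"
    using P q_sum q_nonneg by (intro mult_le_one) (auto simp: substochastic_def sum_nonneg)
  finally show "(\<Sum>sl'\<in>UNIV. Pl enc P pih sl a sl') \<le> 1" .
qed

lemma Pl_policy_perturbation:
  fixes P :: "'s::finite \<Rightarrow> 'a \<Rightarrow> 's \<Rightarrow> real"
  assumes P: "substochastic P" and K: "\<And>s \<omega>. \<bar>pih s \<omega> - pih' s \<omega>\<bar> \<le> K"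
  shows "\<bar>Pl enc P pih sl a sl' - Pl enc P pih' sl a sl'\<bar> \<le> K"
proof -
  obtain s \<omega> d where sl: "sl = (s, \<omega>, d)" by (cases sl) auto
  obtain s' \<omega>' d' where sl': "sl' = (s', \<omega>', d')" by (cases sl') auto
  have "0 \<le> K" using K[of s \<omega>] by linarith
  have "P s a s' \<le> (\<Sum>s''\<in>UNIV. P s a s'')"
    using P by (intro member_le_sum) (auto simp: substochastic_def)
  also have "\<dots> \<le> 1" using P by (simp add: substochastic_def)
  finally have P_le_1: "P s a s' \<le> 1" .
  have "\<bar>Pl enc P pih sl a sl' - Pl enc P pih' sl a sl'\<bar>
      \<le> Pde enc d d' * P s a s' * \<bar>pih s \<omega>' - pih' s \<omega>'\<bar>"
    using P by (simp add: Pl_def Pde_def sl sl' substochastic_def abs_mult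
        flip: right_diff_distrib)
  also have "\<dots> \<le> 1 * K"
    using P P_le_1 K[of s \<omega>'] by (intro mult_mono) (auto simp: Pde_def substochastic_def)
  finally show ?thesis by simp
qed

lemma hfield_eq_bellman: "hfield enc P rl \<gamma> Fh x y = bellman rl \<gamma> (Pl enc P (Fh y)) x - x"
  by (simp add: hfield_def bellman_def greedy_value_def vec_eq_iff case_prod_unfold)

theorem lemma1:
  fixes P :: "'s::finite \<Rightarrow> 'a::finite \<Rightarrow> 's \<Rightarrow> real"
    and enc :: "'d::finite \<Rightarrow> nat"
    and rl :: "('s \<times> 's \<times> 'd) \<Rightarrow> 'a \<Rightarrow> real"
    and \<gamma> :: real
    and Fh :: "real^('s \<times> 's) \<Rightarrow> 's \<Rightarrow> 's \<Rightarrow> real"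
  assumes P_nonneg: "\<And>s a s'. P s a s' \<ge> 0"
    and P_sum: "\<And>s a. (\<Sum>s'\<in>UNIV. P s a s') = 1"
    and enc_bij: "bij_betw enc UNIV {..<CARD('d)}"
    and gamma: "0 < \<gamma>" "\<gamma> < 1"
    and Fh_policy_nonneg: "\<And>y s \<omega>. Fh y s \<omega> \<ge> 0"
    and Fh_policy_sum: "\<And>y s. (\<Sum>\<omega>\<in>UNIV. Fh y s \<omega>) = 1"
    and Fh_lipschitz: "\<exists>L. \<forall>y1 y2 s \<omega>. \<bar>Fh y1 s \<omega> - Fh y2 s \<omega>\<bar> \<le> L * infnorm (y1 - y2)"
  shows "\<exists>lam :: real^('s \<times> 's) \<Rightarrow> real^(('s \<times> 's \<times> 'd) \<times> 'a).
           (\<forall>y. glob_asym_stable_eq (\<lambda>x. hfield enc P rl \<gamma> Fh x y) (lam y)) \<and>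
           (\<exists>L. L-lipschitz_on UNIV lam)"
proof -
  obtain L0 where L0: "\<And>y1 y2 s \<omega>. \<bar>Fh y1 s \<omega> - Fh y2 s \<omega>\<bar> \<le> L0 * infnorm (y1 - y2)"
    using Fh_lipschitz by blast
  have L: "\<bar>Fh y1 s \<omega> - Fh y2 s \<omega>\<bar> \<le> \<bar>L0\<bar> * infnorm (y1 - y2)" for y1 y2 s \<omega>
    using L0 by (meson abs_ge_self infnorm_pos_le mult_right_mono order_trans)
  have P: "substochastic P" using P_nonneg P_sum by (simp add: substochastic_def)
  have "inj enc" using enc_bij by (simp add: bij_betw_def)
  define T where "T y = bellman rl \<gamma> (Pl enc P (Fh y))" for y
  have "substochastic (Pl enc P (Fh y))" for y
    using Fh_policy_nonneg Fh_policy_sum by (intro substochastic_Pl[OF P \<open>inj enc\<close>]) simp_all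
  then have contr: "infnorm (T y x - T y x') \<le> \<gamma> * infnorm (x - x')" for y x x'
    unfolding T_def using gamma by (simp add: bellman_contraction)
  define lam where "lam y = (SOME p. T y p = p)" for y
  have fixed: "T y (lam y) = lam y" for y
    unfolding lam_def using gamma
    by (intro someI_ex[of "\<lambda>p. T y p = p"] infnorm_contraction_has_fixpoint[OF _ gamma(2) contr])
      simp
  define B where "B = infnorm (\<chi> i. rl (fst i) (snd i)) / (1 - \<gamma>)"
  have B: "infnorm (lam y) \<le> B" for y
    using infnorm_contraction_fixpoint_le[OF gamma(2) contr fixed] by (simp add: B_def T_def bellman_zero)
  define C where "C = \<gamma> * CARD('s \<times> 's \<times> 'd) * \<bar>L0\<bar> * B / (1 - \<gamma>)"
  have C_nonneg: "0 \<le> C" using gamma by (simp add: C_def B_def infnorm_pos_le)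
  have pert: "infnorm (T y x - T y' x) \<le> \<gamma> * CARD('s \<times> 's \<times> 'd) * \<bar>L0\<bar> * infnorm (y - y') * infnorm x"
    for y y' x
  proof -
    have "infnorm (T y x - T y' x) \<le> \<gamma> * (CARD('s \<times> 's \<times> 'd) * (\<bar>L0\<bar> * infnorm (y - y')) * infnorm x)"
      unfolding T_def
      by (rule bellman_kernel_perturbation[rotated], rule Pl_policy_perturbation[OF P L]) (use gamma in simp)
    then show ?thesis by (simp add: mult_ac)
  qed
  have "infnorm (lam y - lam y') \<le> C * infnorm (y - y')" for y y'
    unfolding C_def
    by (rule infnorm_contraction_fixpoint_lipschitz[OF gamma(2) contr fixed B _ pert]) (use gamma in simp)
  then have "\<exists>L. L-lipschitz_on UNIV lam"
    using gamma lipschitz_on_UNIV_if_infnorm_le by (metis C_nonneg)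
  moreover have "glob_asym_stable_eq (\<lambda>x. hfield enc P rl \<gamma> Fh x y) (lam y)" for y
    using contraction_flow_glob_asym_stable[OF gamma(2) contr fixed]
    by (simp add: hfield_eq_bellman T_def)
  ultimately show ?thesis by blast
qed

end
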